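(* Let $Q=[0,L]\times[0,1]$ with $L\ge1$, uniform density $\phi\equiv1$, $n=2$ generators, and $\mathcal H(p_1,p_2)=\int_Q\min_{i=1,2}\|q-p_i\|^2dq$. Consider the centroidal Voronoi configuration $p_1=(L/2,1/4)$, $p_2=(L/2,3/4)$, whose Voronoi cells are the two halves of $Q$ separated by the segment joining the midpoints of the two sides of length 1. If $L>\sqrt{3/2}$, the Hessian $\nabla^2\mathcal H$ at this configuration has exactly one negative eigenvalue; if $L=\sqrt{3/2}$, it has a zero eigenvalue.
   Context: The Voronoi cell of $p_i$ is $V_i=\{q\in Q:\|q-p_i\|\le\|q-p_j\|\ \forall j\}$; a configuration is centroidal if each $p_i$ is the centroid of $V_i$. The Hessian is with respect to $(p_1,p_2)\in\mathbb{R}^4$. *)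

theory Defs
  imports "HOL-Analysis.Analysis" "HOL-Computational_Algebra.Polynomial"
begin

definition rectQ :: "real \<Rightarrow> (real^2) set" where
  "rectQ L = cbox (vector [0, 0]) (vector [L, 1])"

definition Hcost :: "real \<Rightarrow> real^2 \<Rightarrow> real^2 \<Rightarrow> real" where
  "Hcost L p1 p2 = integral (rectQ L) (\<lambda>q. min ((norm (q - p1))\<^sup>2) ((norm (q - p2))\<^sup>2))"

definition Hflat :: "real \<Rightarrow> real^4 \<Rightarrow> real" where
  "Hflat L z = Hcost L (vector [z$1, z$2]) (vector [z$3, z$4])"

definition partial_deriv :: "'n::finite \<Rightarrow> (real^'n \<Rightarrow> real) \<Rightarrow> real^'n \<Rightarrow> real" where
  "partial_deriv i f z = deriv (\<lambda>t. f (z + t *\<^sub>R axis i 1)) 0"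

definition hessian :: "(real^'n::finite \<Rightarrow> real) \<Rightarrow> real^'n \<Rightarrow> real^'n^'n" where
  "hessian f z = (\<chi> i j. partial_deriv i (partial_deriv j f) z)"

definition is_eigenvalue :: "real^'n::finite^'n \<Rightarrow> real \<Rightarrow> bool" where
  "is_eigenvalue A c \<longleftrightarrow> (\<exists>v. v \<noteq> 0 \<and> A *v v = c *\<^sub>R v)"

definition charpoly :: "real^'n::finite^'n \<Rightarrow> real poly" where
  "charpoly A = det (\<chi> i j. (if i = j then [:0, 1:] else 0) - [:A$i$j:])"

definition num_neg_eigenvalues :: "real^'n::finite^'n \<Rightarrow> nat" where
  "num_neg_eigenvalues A =
     (\<Sum>c\<in>{c. c < 0 \<and> is_eigenvalue A c}. order c (charpoly A))"

end

theory Submission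
  imports Defs
begin

text \<open>
  While the generators stay close to the symmetric configuration, the perpendicular bisector of
  \<open>p\<^sub>1\<close> and \<open>p\<^sub>2\<close> is the graph of a function \<open>y = e - k x\<close> with values in \<open>[0,1]\<close>
  on \<open>[0,L]\<close>. Integrating column by column then gives the energy in closed form there, and
  differentiating twice at the symmetric configuration yields, in coordinates
  \<open>(x\<^sub>1,y\<^sub>1,x\<^sub>2,y\<^sub>2)\<close>, a Hessian that is invariant under exchanging the generators and
  decouples the \<open>x\<close>- and \<open>y\<close>-coordinates. Its eigenvalues are
  \<open>L\<close>, \<open>L/2\<close>, \<open>L\<close> and \<open>L (1 - 2L\<^sup>2/3)\<close>; only the last can be negative or zero, and it is
  negative exactly for \<open>L > \<surd>(3/2)\<close>, simple, and zero for \<open>L = \<surd>(3/2)\<close>.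
\<close>

section \<open>Matrices invariant under exchanging two generators\<close>

lemma vector_4 [simp]:
  "(vector [x,y,z,w] :: ('a::zero)^4) $ 1 = x"
  "(vector [x,y,z,w] :: ('a::zero)^4) $ 2 = y"
  "(vector [x,y,z,w] :: ('a::zero)^4) $ 3 = z"
  "(vector [x,y,z,w] :: ('a::zero)^4) $ 4 = w"
  unfolding vector_def by simp_all

lemma det_4:
  "det (A::'a::comm_ring_1^4^4) =
    A$1$1 * A$2$2 * A$3$3 * A$4$4 - A$1$1 * A$2$2 * A$3$4 * A$4$3
  - A$1$1 * A$2$3 * A$3$2 * A$4$4 + A$1$1 * A$2$3 * A$3$4 * A$4$2
  + A$1$1 * A$2$4 * A$3$2 * A$4$3 - A$1$1 * A$2$4 * A$3$3 * A$4$2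
  - A$1$2 * A$2$1 * A$3$3 * A$4$4 + A$1$2 * A$2$1 * A$3$4 * A$4$3
  + A$1$2 * A$2$3 * A$3$1 * A$4$4 - A$1$2 * A$2$3 * A$3$4 * A$4$1
  - A$1$2 * A$2$4 * A$3$1 * A$4$3 + A$1$2 * A$2$4 * A$3$3 * A$4$1
  + A$1$3 * A$2$1 * A$3$2 * A$4$4 - A$1$3 * A$2$1 * A$3$4 * A$4$2
  - A$1$3 * A$2$2 * A$3$1 * A$4$4 + A$1$3 * A$2$2 * A$3$4 * A$4$1
  + A$1$3 * A$2$4 * A$3$1 * A$4$2 - A$1$3 * A$2$4 * A$3$2 * A$4$1
  - A$1$4 * A$2$1 * A$3$2 * A$4$3 + A$1$4 * A$2$1 * A$3$3 * A$4$2
  + A$1$4 * A$2$2 * A$3$1 * A$4$3 - A$1$4 * A$2$2 * A$3$3 * A$4$1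
  - A$1$4 * A$2$3 * A$3$1 * A$4$2 + A$1$4 * A$2$3 * A$3$2 * A$4$1"
proof -
  have f1: "finite {2::4, 3, 4}" "1 \<notin> {2::4, 3, 4}" by auto
  have f2: "finite {3::4, 4}" "2 \<notin> {3::4, 4}" by auto
  have f3: "finite {4::4}" "3 \<notin> {4::4}" by auto
  show ?thesis
    unfolding det_def UNIV_4
    unfolding sum_over_permutations_insert[OF f1]
    unfolding sum_over_permutations_insert[OF f2]
    unfolding sum_over_permutations_insert[OF f3]
    unfolding permutes_sing
    by (simp add: sign_swap_id permutation_swap_id permutation_compose sign_compose sign_id
        swap_id_eq algebra_simps)
qed

text \<open>In coordinates \<open>(x\<^sub>1,y\<^sub>1,x\<^sub>2,y\<^sub>2)\<close>: symmetric under \<open>p\<^sub>1 \<leftrightarrow> p\<^sub>2\<close>, with no coupling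
  between \<open>x\<close>- and \<open>y\<close>-coordinates.\<close>
definition swap_symmetric_matrix :: "real \<Rightarrow> real \<Rightarrow> real \<Rightarrow> real \<Rightarrow> real^4^4" where
  "swap_symmetric_matrix a b c d =
     vector [vector [a, 0, b, 0], vector [0, c, 0, d], vector [b, 0, a, 0], vector [0, d, 0, c]]"

lemma charpoly_swap_symmetric_matrix:
  "charpoly (swap_symmetric_matrix a b c d)
     = [:-(a-b), 1:] * ([:-(a+b), 1:] * [:-(c+d), 1:] * [:-(c-d), 1:])"
proof -
  have "poly (charpoly (swap_symmetric_matrix a b c d)) x
      = poly ([:-(a-b), 1:] * ([:-(a+b), 1:] * [:-(c+d), 1:] * [:-(c-d), 1:])) x" for x
    unfolding charpoly_def det_4 by (simp add: swap_symmetric_matrix_def) algebra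
  then show ?thesis using poly_eq_poly_eq_iff by blast
qed

lemma swap_symmetric_matrix_mult_vec:
  "(swap_symmetric_matrix a b c d *v v) $ 1 = a * v$1 + b * v$3"
  "(swap_symmetric_matrix a b c d *v v) $ 2 = c * v$2 + d * v$4"
  "(swap_symmetric_matrix a b c d *v v) $ 3 = b * v$1 + a * v$3"
  "(swap_symmetric_matrix a b c d *v v) $ 4 = d * v$2 + c * v$4"
  by (simp_all add: matrix_vector_mult_def sum_4 swap_symmetric_matrix_def)

lemma is_eigenvalue_swap_symmetric_matrix_diff:
  "is_eigenvalue (swap_symmetric_matrix a b c d) (a - b)"
  unfolding is_eigenvalue_def
proof (intro exI conjI)
  show "(vector [1, 0, -1, 0] :: real^4) \<noteq> 0"
    by (metis vector_4(1) zero_index zero_neq_one)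
  show "swap_symmetric_matrix a b c d *v vector [1, 0, -1, 0]
      = (a - b) *\<^sub>R (vector [1, 0, -1, 0] :: real^4)"
    unfolding vec_eq_iff forall_4 swap_symmetric_matrix_mult_vec by (simp add: algebra_simps)
qed

lemma is_eigenvalue_swap_symmetric_matrixD:
  assumes "is_eigenvalue (swap_symmetric_matrix a b c d) l"
  shows "l \<in> {a - b, a + b, c + d, c - d}"
proof (rule ccontr)
  assume l: "l \<notin> {a - b, a + b, c + d, c - d}"
  obtain v where v: "v \<noteq> 0" "swap_symmetric_matrix a b c d *v v = l *\<^sub>R v"
    using assms unfolding is_eigenvalue_def by blast
  have "(swap_symmetric_matrix a b c d *v v) $ i = l * v $ i" for i using v(2) by simp
  note E = this[of 1] this[of 2] this[of 3] this[of 4]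
  note E = E[unfolded swap_symmetric_matrix_mult_vec]
  have "(a + b - l) * (v$1 + v$3) = 0" "(a - b - l) * (v$1 - v$3) = 0"
    "(c + d - l) * (v$2 + v$4) = 0" "(c - d - l) * (v$2 - v$4) = 0"
    using E by algebra+
  then have "v$1 + v$3 = 0" "v$1 - v$3 = 0" "v$2 + v$4 = 0" "v$2 - v$4 = 0"
    using l by auto
  then have "v = 0" unfolding vec_eq_iff forall_4 by simp
  with v(1) show False by simp
qed

lemma order_charpoly_swap_symmetric_matrix:
  assumes "a - b \<notin> {a + b, c + d, c - d}"
  shows "order (a - b) (charpoly (swap_symmetric_matrix a b c d)) = 1"
proof -
  let ?Q = "[:-(a+b), 1:] * [:-(c+d), 1:] * [:-(c-d), 1:]"
  have "poly ?Q (a - b) = ((a - b) - (a+b)) * ((a - b) - (c+d)) * ((a - b) - (c-d))"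
    by (simp add: algebra_simps)
  with assms have Q: "poly ?Q (a - b) \<noteq> 0" by auto
  then have "[:-(a - b), 1:] * ?Q \<noteq> 0" by auto
  then have "order (a - b) ([:-(a - b), 1:] * ?Q) = order (a - b) [:-(a - b), 1:] + order (a - b) ?Q"
    by (rule order_mult)
  also have "\<dots> = 1" using order_power_n_n[of "a - b" 1] order_0I[OF Q] by simp
  finally show ?thesis unfolding charpoly_swap_symmetric_matrix .
qed

lemma num_neg_eigenvalues_swap_symmetric_matrix:
  assumes "a - b < 0" "0 \<le> a + b" "0 \<le> c + d" "0 \<le> c - d"
  shows "num_neg_eigenvalues (swap_symmetric_matrix a b c d) = 1"
proof -
  have "{l. l < 0 \<and> is_eigenvalue (swap_symmetric_matrix a b c d) l} = {a - b}"
    using assms is_eigenvalue_swap_symmetric_matrixD is_eigenvalue_swap_symmetric_matrix_diff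
    by fastforce
  moreover have "order (a - b) (charpoly (swap_symmetric_matrix a b c d)) = 1"
    using assms by (intro order_charpoly_swap_symmetric_matrix) auto
  ultimately show ?thesis unfolding num_neg_eigenvalues_def by simp
qed

definition vec2_of_pair :: "real \<times> real \<Rightarrow> real^2" where
  "vec2_of_pair p = vector [fst p, snd p]"

lemma vec2_of_pair_nth [simp]: "vec2_of_pair p $ 1 = fst p" "vec2_of_pair p $ 2 = snd p"
  by (simp_all add: vec2_of_pair_def)

lemma vec2_of_pair_eq_axis: "vec2_of_pair = (\<lambda>p. fst p *\<^sub>R axis 1 1 + snd p *\<^sub>R axis 2 1)"
  by (simp add: fun_eq_iff vec_eq_iff forall_2 axis_def)

lemma vec2_of_pair_image_cbox:
  "vec2_of_pair ` cbox (a,b) (c,d) = cbox (vector [a,b]) (vector [c,d])"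
proof (rule set_eqI, rule iffI)
  fix v :: "real^2" assume "v \<in> cbox (vector [a,b]) (vector [c,d])"
  moreover have "v = vec2_of_pair (v$1, v$2)" by (simp add: vec_eq_iff forall_2)
  ultimately show "v \<in> vec2_of_pair ` cbox (a,b) (c,d)"
    by (auto simp: mem_box_cart forall_2 intro!: image_eqI[of v])
qed (auto simp: mem_box_cart forall_2)

lemma pair_of_vec2_image_cbox:
  "(\<lambda>v::real^2. (v$1, v$2)) ` cbox u v = cbox (u$1, u$2) (v$1, v$2)"
proof (rule set_eqI, rule iffI)
  fix p :: "real \<times> real" assume "p \<in> cbox (u$1, u$2) (v$1, v$2)"
  then have "vec2_of_pair p \<in> cbox u v" by (cases p) (auto simp: mem_box_cart forall_2)
  then show "p \<in> (\<lambda>v::real^2. (v$1, v$2)) ` cbox u v" by force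
qed (auto simp: mem_box_cart forall_2)

lemma measure_vec2_of_pair_image_cbox:
  "measure lborel (vec2_of_pair ` cbox (a,b) (c,d)) = measure lborel (cbox (a,b) (c,d))"
proof (cases "a \<le> c \<and> b \<le> d")
  case True
  then have "cbox (vector [a,b]) (vector [c,d]) \<noteq> ({}::(real^2) set)"
    by (auto simp: mem_box_cart forall_2 set_eq_iff intro!: exI[of _ "vector [a,b]"])
  with True show ?thesis
    by (simp add: vec2_of_pair_image_cbox content_Pair content_cbox_cart UNIV_2 content_real)
next
  case False
  then have "cbox (vector [a,b]) (vector [c,d]) = ({}::(real^2) set)"
    by (auto simp: mem_box_cart forall_2)
  with False show ?thesis
    by (auto simp: vec2_of_pair_image_cbox content_Pair content_real)
qed

lemma has_integral_vec2_of_pair: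
  assumes "(f has_integral i) (cbox (vector [a,b]) (vector [c,d]))"
  shows "((\<lambda>p. f (vec2_of_pair p)) has_integral i) (cbox (a,b) (c,d))"
proof -
  have "((\<lambda>p. f (vec2_of_pair p)) has_integral (1/1) *\<^sub>R i)
        ((\<lambda>v::real^2. (v$1, v$2)) ` cbox (vector [a,b]) (vector [c,d]))"
  proof (rule has_integral_twiddle[where g = vec2_of_pair and h = "\<lambda>v. (v$1, v$2)"])
    show "\<And>x. continuous (at x) vec2_of_pair"
      unfolding vec2_of_pair_eq_axis by (intro continuous_intros)
    show "\<And>u v. \<exists>w z. vec2_of_pair ` cbox u v = cbox w z"
      by (metis vec2_of_pair_image_cbox prod.collapse)
    show "\<And>u v. measure lborel (vec2_of_pair ` cbox u v) = 1 * measure lborel (cbox u v)"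
      by (metis measure_vec2_of_pair_image_cbox mult_1 prod.collapse)
  qed (use assms pair_of_vec2_image_cbox in \<open>auto simp: vec_eq_iff forall_2\<close>)
  then show ?thesis by (simp add: pair_of_vec2_image_cbox)
qed

section \<open>The energy in closed form\<close>

lemma has_integral_antiderivative:
  fixes a b :: real
  assumes "a \<le> b" "\<And>y. y \<in> {a..b} \<Longrightarrow> f y = p y"
    and "\<And>y. (P has_real_derivative p y) (at y)"
  shows "(f has_integral (P b - P a)) {a..b}"
proof (rule fundamental_theorem_of_calculus[OF assms(1)])
  fix y assume y: "y \<in> {a..b}"
  have "(P has_real_derivative f y) (at y within {a..b})"
    using assms(3)[of y] assms(2)[OF y] by (simp add: has_field_derivative_at_within)
  then show "(P has_vector_derivative f y) (at y within {a..b})"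
    by (simp add: has_real_derivative_iff_has_vector_derivative)
qed

text \<open>For \<open>v\<^sub>1 \<noteq> v\<^sub>2\<close> the perpendicular bisector of \<open>(u\<^sub>1,v\<^sub>1)\<close> and \<open>(u\<^sub>2,v\<^sub>2)\<close> is the
  line \<open>y = bisector_intercept - bisector_slope * x\<close>.\<close>
definition bisector_slope :: "real \<Rightarrow> real \<Rightarrow> real \<Rightarrow> real \<Rightarrow> real" where
  "bisector_slope u1 v1 u2 v2 = (u2 - u1) / (v2 - v1)"

definition bisector_intercept :: "real \<Rightarrow> real \<Rightarrow> real \<Rightarrow> real \<Rightarrow> real" where
  "bisector_intercept u1 v1 u2 v2 = (v1 + v2) / 2 + bisector_slope u1 v1 u2 v2 * (u1 + u2) / 2"

lemma sqdist_diff_bisector: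
  assumes "v1 \<noteq> v2"
  shows "((x-u2)^2 + (y-v2)^2) - ((x-u1)^2 + (y-v1)^2)
       = -2 * (v2-v1) * (y - (bisector_intercept u1 v1 u2 v2 - bisector_slope u1 v1 u2 v2 * x))"
proof -
  define k where "k = bisector_slope u1 v1 u2 v2"
  have k: "k * (v2 - v1) = u2 - u1" using assms unfolding k_def bisector_slope_def by simp
  have "-2 * (v2-v1) * (y - (bisector_intercept u1 v1 u2 v2 - k * x))
     = -2 * (v2-v1) * y + (v2-v1) * (v1+v2) + (k * (v2 - v1)) * (u1+u2-2*x)"
    unfolding bisector_intercept_def k_def by (simp add: field_simps)
  also have "\<dots> = ((x-u2)^2 + (y-v2)^2) - ((x-u1)^2 + (y-v1)^2)"
    unfolding k by (simp add: algebra_simps power2_eq_square)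
  finally show ?thesis unfolding k_def by simp
qed

lemma has_integral_min_sqdist_column:
  fixes x u1 v1 u2 v2 :: real
  defines "y0 \<equiv> bisector_intercept u1 v1 u2 v2 - bisector_slope u1 v1 u2 v2 * x"
  assumes v: "v1 < v2" and y0: "0 \<le> y0" "y0 \<le> 1"
  shows "((\<lambda>y. min ((x-u1)^2 + (y-v1)^2) ((x-u2)^2 + (y-v2)^2)) has_integral
          ((x-u1)^2 + ((1-v1)^3 + v1^3)/3 - (v2-v1) * (1-y0)^2)) {0..1}"
proof -
  let ?f = "\<lambda>y. min ((x-u1)^2 + (y-v1)^2) ((x-u2)^2 + (y-v2)^2)"
  have diff: "((x-u2)^2 + (y-v2)^2) - ((x-u1)^2 + (y-v1)^2) = -2 * (v2-v1) * (y - y0)" for y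
    unfolding y0_def using v by (intro sqdist_diff_bisector) simp
  have below: "(?f has_integral
      (((x-u1)^2 * y0 + (y0-v1)^3/3) - ((x-u1)^2 * 0 + (0-v1)^3/3))) {0..y0}"
  proof (rule has_integral_antiderivative[where p = "\<lambda>y. (x-u1)^2 + (y-v1)^2"
      and P = "\<lambda>y. (x-u1)^2 * y + (y-v1)^3/3"])
    fix y assume "y \<in> {0..y0}"
    then have "-2 * (v2-v1) * (y - y0) \<ge> 0" using v by (auto intro!: mult_nonpos_nonpos)
    then show "?f y = (x-u1)^2 + (y-v1)^2" using diff[of y] by (simp add: min_def)
  qed (use y0 in \<open>auto intro!: derivative_eq_intros simp: power2_eq_square\<close>)
  have above: "(?f has_integral
      (((x-u2)^2 * 1 + (1-v2)^3/3) - ((x-u2)^2 * y0 + (y0-v2)^3/3))) {y0..1}"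
  proof (rule has_integral_antiderivative[where p = "\<lambda>y. (x-u2)^2 + (y-v2)^2"
      and P = "\<lambda>y. (x-u2)^2 * y + (y-v2)^3/3"])
    fix y assume "y \<in> {y0..1}"
    then have "-2 * (v2-v1) * (y - y0) \<le> 0" using v by (auto intro!: mult_nonpos_nonneg)
    then show "?f y = (x-u2)^2 + (y-v2)^2" using diff[of y] by (simp add: min_def)
  qed (use y0 in \<open>auto intro!: derivative_eq_intros simp: power2_eq_square\<close>)
  have u2: "(x-u2)^2 = (x-u1)^2 + v1^2 - v2^2 - 2 * (v2-v1) * (- y0)"
    using diff[of 0] by (simp add: algebra_simps)
  have "(((x-u1)^2 * y0 + (y0-v1)^3/3) - ((x-u1)^2 * 0 + (0-v1)^3/3)) +
      (((x-u2)^2 * 1 + (1-v2)^3/3) - ((x-u2)^2 * y0 + (y0-v2)^3/3))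
    = (x-u1)^2 + ((1-v1)^3 + v1^3)/3 - (v2-v1) * (1-y0)^2"
    unfolding u2 by (simp add: field_simps power2_eq_square power3_eq_cube)
  with has_integral_combine[OF y0 below above] show ?thesis by simp
qed

definition energy_formula :: "real \<Rightarrow> real \<Rightarrow> real \<Rightarrow> real \<Rightarrow> real \<Rightarrow> real" where
  "energy_formula L u1 v1 u2 v2 =
     (let e = bisector_intercept u1 v1 u2 v2; k = bisector_slope u1 v1 u2 v2 in
       ((L-u1)^3 + u1^3)/3 + L * ((1-v1)^3 + v1^3)/3
       - (v2-v1) * ((1-e)^2 * L + (1-e) * k * L^2 + k^2 * L^3/3))"

lemma norm_diff_vector2_sq: "(norm (vector [x,y] - vector [a,b] :: real^2))^2 = (x-a)^2 + (y-b)^2"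
  unfolding power2_norm_eq_inner by (simp add: inner_vec_def sum_2 power2_eq_square)

lemma Hcost_eq_energy_formula:
  assumes L: "L \<ge> 0" and v: "v1 < v2"
    and strip: "\<And>x. x \<in> {0..L} \<Longrightarrow>
      0 \<le> bisector_intercept u1 v1 u2 v2 - bisector_slope u1 v1 u2 v2 * x \<and>
      bisector_intercept u1 v1 u2 v2 - bisector_slope u1 v1 u2 v2 * x \<le> 1"
  shows "Hcost L (vector [u1,v1]) (vector [u2,v2]) = energy_formula L u1 v1 u2 v2"
proof -
  define e where "e = bisector_intercept u1 v1 u2 v2"
  define k where "k = bisector_slope u1 v1 u2 v2"
  let ?c = "\<lambda>q::real^2. min ((norm (q - vector [u1,v1]))\<^sup>2) ((norm (q - vector [u2,v2]))\<^sup>2)"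
  let ?h = "\<lambda>p::real \<times> real. min ((fst p-u1)^2 + (snd p-v1)^2) ((fst p-u2)^2 + (snd p-v2)^2)"
  have "(?c has_integral Hcost L (vector [u1,v1]) (vector [u2,v2])) (rectQ L)"
    unfolding Hcost_def rectQ_def
    by (intro integrable_integral integrable_continuous continuous_intros)
  then have "(?h has_integral Hcost L (vector [u1,v1]) (vector [u2,v2])) (cbox (0,0) (L,1))"
    using has_integral_vec2_of_pair[of ?c] unfolding rectQ_def
    by (simp add: vec2_of_pair_def norm_diff_vector2_sq)
  then have "Hcost L (vector [u1,v1]) (vector [u2,v2]) = integral (cbox (0,0) (L,1)) ?h"
    by (rule integral_unique[symmetric])
  also have "\<dots> = integral (cbox 0 L) (\<lambda>x. integral (cbox 0 1) (\<lambda>y. ?h (x,y)))"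
    by (rule integral_prod_continuous) (intro continuous_intros)
  also have "\<dots> = integral {0..L} (\<lambda>x. (x-u1)^2 + ((1-v1)^3 + v1^3)/3 - (v2-v1) * (1-(e - k*x))^2)"
    unfolding cbox_interval
  proof (rule integral_cong)
    fix x assume "x \<in> {0..L}"
    then show "integral {0..1} (\<lambda>y. ?h (x,y))
        = (x-u1)^2 + ((1-v1)^3 + v1^3)/3 - (v2-v1) * (1-(e - k*x))^2"
      using has_integral_min_sqdist_column[OF v, where x = x and ?u1.0 = u1 and ?u2.0 = u2] strip[of x]
      unfolding e_def k_def by (simp add: integral_unique)
  qed
  also have "\<dots> = energy_formula L u1 v1 u2 v2"
  proof (rule integral_unique)
    let ?P = "\<lambda>x. (x-u1)^3/3 + ((1-v1)^3 + v1^3)/3 * x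
                - (v2-v1) * ((1-e)^2 * x + (1-e) * k * x^2 + k^2 * x^3/3)"
    let ?p = "\<lambda>x. (x-u1)^2 + ((1-v1)^3 + v1^3)/3 - (v2-v1) * (1-(e - k*x))^2"
    have "(?P has_real_derivative ?p x) (at x)" for x
      by (rule derivative_eq_intros refl | simp)+ (simp add: field_simps power2_eq_square)
    then have "(?p has_integral ?P L - ?P 0) {0..L}"
      by (intro has_integral_antiderivative[OF L]) auto
    moreover have "?P L - ?P 0 = energy_formula L u1 v1 u2 v2"
      unfolding energy_formula_def e_def[symmetric] k_def[symmetric] Let_def by (simp add: field_simps)
    ultimately show "(?p has_integral energy_formula L u1 v1 u2 v2) {0..L}" by simp
  qed
  finally show ?thesis .
qed

definition energy_dx1 :: "real \<Rightarrow> real \<Rightarrow> real \<Rightarrow> real \<Rightarrow> real \<Rightarrow> real" where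
  "energy_dx1 L u1 v1 u2 v2 =
     (let e = bisector_intercept u1 v1 u2 v2; k = bisector_slope u1 v1 u2 v2 in
       2 * (u1 * e * L - (u1 * k + e) * L^2/2 + k * L^3/3))"

definition energy_dy1 :: "real \<Rightarrow> real \<Rightarrow> real \<Rightarrow> real \<Rightarrow> real \<Rightarrow> real" where
  "energy_dy1 L u1 v1 u2 v2 =
     (let e = bisector_intercept u1 v1 u2 v2; k = bisector_slope u1 v1 u2 v2 in
       2 * v1 * (e * L - k * L^2/2) - (e^2 * L - e * k * L^2 + k^2 * L^3/3))"

definition energy_dx2 :: "real \<Rightarrow> real \<Rightarrow> real \<Rightarrow> real \<Rightarrow> real \<Rightarrow> real" where
  "energy_dx2 L u1 v1 u2 v2 =
     (let e = bisector_intercept u1 v1 u2 v2; k = bisector_slope u1 v1 u2 v2 in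
       2 * (u2 * (1-e) * L + (u2 * k - (1-e)) * L^2/2 - k * L^3/3))"

definition energy_dy2 :: "real \<Rightarrow> real \<Rightarrow> real \<Rightarrow> real \<Rightarrow> real \<Rightarrow> real" where
  "energy_dy2 L u1 v1 u2 v2 =
     (let e = bisector_intercept u1 v1 u2 v2; k = bisector_slope u1 v1 u2 v2 in
       2 * v2 * (L - e * L + k * L^2/2) - (L - (e^2 * L - e * k * L^2 + k^2 * L^3/3)))"

lemma bisector_slope_deriv_x1:
  assumes "v1 \<noteq> v2"
  shows "((\<lambda>t. bisector_slope (u1+t) v1 u2 v2) has_real_derivative -1/(v2-v1)) (at 0)"
proof -
  have "(\<lambda>t. bisector_slope (u1+t) v1 u2 v2) = (\<lambda>t. (u2 - u1)/(v2-v1) - t * (1/(v2-v1)))"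
    by (auto simp: bisector_slope_def fun_eq_iff diff_divide_distrib add_divide_distrib)
  then show ?thesis using assms by (auto intro!: derivative_eq_intros)
qed

lemma bisector_slope_deriv_x2:
  assumes "v1 \<noteq> v2"
  shows "((\<lambda>t. bisector_slope u1 v1 (u2+t) v2) has_real_derivative 1/(v2-v1)) (at 0)"
proof -
  have "(\<lambda>t. bisector_slope u1 v1 (u2+t) v2) = (\<lambda>t. (u2 - u1)/(v2-v1) + t * (1/(v2-v1)))"
    by (auto simp: bisector_slope_def fun_eq_iff diff_divide_distrib add_divide_distrib)
  then show ?thesis using assms by (auto intro!: derivative_eq_intros)
qed

lemma bisector_slope_deriv_y1:
  assumes "v1 \<noteq> v2"
  shows "((\<lambda>t. bisector_slope u1 (v1+t) u2 v2) has_real_derivative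
           bisector_slope u1 v1 u2 v2 / (v2-v1)) (at 0)"
proof -
  have "(\<lambda>t. bisector_slope u1 (v1+t) u2 v2) = (\<lambda>t. (u2 - u1) / ((v2-v1) - t))"
    by (auto simp: bisector_slope_def fun_eq_iff algebra_simps)
  moreover have "((\<lambda>t. (u2 - u1) / ((v2-v1) - t)) has_real_derivative
      (u2-u1) / ((v2-v1) * (v2-v1))) (at 0)"
    using assms by (auto intro!: derivative_eq_intros simp: power2_eq_square)
  ultimately show ?thesis by (simp add: bisector_slope_def)
qed

lemma bisector_slope_deriv_y2:
  assumes "v1 \<noteq> v2"
  shows "((\<lambda>t. bisector_slope u1 v1 u2 (v2+t)) has_real_derivative
           - bisector_slope u1 v1 u2 v2 / (v2-v1)) (at 0)"
proof -
  have "(\<lambda>t. bisector_slope u1 v1 u2 (v2+t)) = (\<lambda>t. (u2 - u1) / ((v2-v1) + t))"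
    by (auto simp: bisector_slope_def fun_eq_iff algebra_simps)
  moreover have "((\<lambda>t. (u2 - u1) / ((v2-v1) + t)) has_real_derivative
      (u1-u2) / ((v2-v1) * (v2-v1))) (at 0)"
    using assms by (auto intro!: derivative_eq_intros simp: power2_eq_square)
  moreover have "- bisector_slope u1 v1 u2 v2 / (v2-v1) = (u1-u2) / ((v2-v1) * (v2-v1))"
    by (simp add: bisector_slope_def divide_divide_eq_left) (metis minus_diff_eq minus_divide_left)
  ultimately show ?thesis by simp
qed

text \<open>Below, \<open>u\<^sub>2 = u\<^sub>1 + k (v\<^sub>2 - v\<^sub>1)\<close> eliminates \<open>u\<^sub>2\<close>, which turns the
  remaining identities into polynomial ones in the slope \<open>k\<close>.\<close>

lemma energy_formula_deriv_x1:
  assumes "v1 \<noteq> v2"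
  shows "((\<lambda>t. energy_formula L (u1+t) v1 u2 v2) has_real_derivative energy_dx1 L u1 v1 u2 v2) (at 0)"
proof -
  define d where "d = v2 - v1"
  define k where "k = bisector_slope u1 v1 u2 v2"
  have d: "d \<noteq> 0" "v2 = v1 + d" "u2 = u1 + k * d"
    using assms unfolding d_def k_def bisector_slope_def by auto
  show ?thesis
    unfolding energy_formula_def energy_dx1_def bisector_intercept_def Let_def
    apply (rule derivative_eq_intros bisector_slope_deriv_x1[OF assms] refl | simp)+
    unfolding k_def[symmetric] using d apply simp
    by (simp add: field_simps) (simp add: algebra_simps power2_eq_square power3_eq_cube)
qed

lemma energy_formula_deriv_y1:
  assumes "v1 \<noteq> v2"
  shows "((\<lambda>t. energy_formula L u1 (v1+t) u2 v2) has_real_derivative energy_dy1 L u1 v1 u2 v2) (at 0)"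
proof -
  define d where "d = v2 - v1"
  define k where "k = bisector_slope u1 v1 u2 v2"
  have d: "d \<noteq> 0" "v2 = v1 + d" "u2 = u1 + k * d"
    using assms unfolding d_def k_def bisector_slope_def by auto
  show ?thesis
    unfolding energy_formula_def energy_dy1_def bisector_intercept_def Let_def
    apply (rule derivative_eq_intros bisector_slope_deriv_y1[OF assms] refl | simp)+
    unfolding k_def[symmetric] using d apply simp
    by (simp add: field_simps) (simp add: algebra_simps power2_eq_square power3_eq_cube)
qed

lemma energy_formula_deriv_x2:
  assumes "v1 \<noteq> v2"
  shows "((\<lambda>t. energy_formula L u1 v1 (u2+t) v2) has_real_derivative energy_dx2 L u1 v1 u2 v2) (at 0)"
proof -
  define d where "d = v2 - v1"
  define k where "k = bisector_slope u1 v1 u2 v2"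
  have d: "d \<noteq> 0" "v2 = v1 + d" "u2 = u1 + k * d"
    using assms unfolding d_def k_def bisector_slope_def by auto
  show ?thesis
    unfolding energy_formula_def energy_dx2_def bisector_intercept_def Let_def
    apply (rule derivative_eq_intros bisector_slope_deriv_x2[OF assms] refl | simp)+
    unfolding k_def[symmetric] using d apply simp
    by (simp add: field_simps)
qed

lemma energy_formula_deriv_y2:
  assumes "v1 \<noteq> v2"
  shows "((\<lambda>t. energy_formula L u1 v1 u2 (v2+t)) has_real_derivative energy_dy2 L u1 v1 u2 v2) (at 0)"
proof -
  define d where "d = v2 - v1"
  define k where "k = bisector_slope u1 v1 u2 v2"
  have d: "d \<noteq> 0" "v2 = v1 + d" "u2 = u1 + k * d"
    using assms unfolding d_def k_def bisector_slope_def by auto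
  show ?thesis
    unfolding energy_formula_def energy_dy2_def bisector_intercept_def Let_def
    apply (rule derivative_eq_intros bisector_slope_deriv_y2[OF assms] refl | simp)+
    unfolding k_def[symmetric] using d apply simp
    by (simp add: field_simps) (simp add: algebra_simps power2_eq_square power3_eq_cube)
qed

section \<open>The Hessian at the symmetric configuration\<close>

lemma partial_deriv_local:
  fixes f g :: "real^'n::finite \<Rightarrow> real"
  assumes "open S" "w \<in> S" and fg: "\<And>v. v \<in> S \<Longrightarrow> f v = g v"
    and g: "((\<lambda>t. g (w + t *\<^sub>R axis i 1)) has_real_derivative D) (at 0)"
  shows "partial_deriv i f w = D"
proof -
  have "open ((\<lambda>t. w + t *\<^sub>R axis i 1) -` S)"
    using \<open>open S\<close> by (intro open_vimage continuous_intros)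
  then have "((\<lambda>t. f (w + t *\<^sub>R axis i 1)) has_real_derivative D) (at 0)"
    by (rule has_field_derivative_transform_within_open[OF g]) (use assms in auto)
  then show ?thesis unfolding partial_deriv_def by (rule DERIV_imp_deriv)
qed

definition centroidal_config :: "real \<Rightarrow> real^4" where
  "centroidal_config L = vector [L/2, 1/4, L/2, 3/4]"

lemma centroidal_config_nth [simp]:
  "centroidal_config L $ 1 = L/2" "centroidal_config L $ 2 = 1/4"
  "centroidal_config L $ 3 = L/2" "centroidal_config L $ 4 = 3/4"
  by (simp_all add: centroidal_config_def)

lemma bisector_in_strip:
  fixes L :: real
  defines "r \<equiv> 1/(20*L)"
  assumes L: "L \<ge> 1"
    and near: "\<bar>u1 - L/2\<bar> < r" "\<bar>v1 - 1/4\<bar> < r" "\<bar>u2 - L/2\<bar> < r" "\<bar>v2 - 3/4\<bar> < r"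
    and x: "x \<in> {0..L}"
  shows "0 \<le> bisector_intercept u1 v1 u2 v2 - bisector_slope u1 v1 u2 v2 * x"
    and "bisector_intercept u1 v1 u2 v2 - bisector_slope u1 v1 u2 v2 * x \<le> 1"
proof -
  define k where "k = bisector_slope u1 v1 u2 v2"
  define q where "q = k * (u1 + u2 - 2*x)"
  have r: "r > 0" "r * L = 1/20" "r \<le> 1/20" using L by (auto simp: r_def field_simps)
  then have v: "v2 - v1 > 2/5" using near by linarith
  have "\<bar>k\<bar> = \<bar>u2 - u1\<bar> / (v2 - v1)" unfolding k_def bisector_slope_def using v by (simp add: abs_divide)
  also have "\<dots> \<le> (2*r) / (2/5)" by (rule frac_le) (use near v in auto)
  finally have k_bound: "\<bar>k\<bar> \<le> 5*r" by simp
  have "\<bar>u1 + u2 - 2*x\<bar> \<le> 11/10 * L"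
    using near x r L unfolding abs_le_iff abs_less_iff atLeastAtMost_iff by linarith
  with k_bound r have "\<bar>k\<bar> * \<bar>u1 + u2 - 2*x\<bar> \<le> (5*r) * (11/10 * L)" by (intro mult_mono) auto
  also have "\<dots> = 11/40" using r by (simp add: algebra_simps)
  finally have "\<bar>q\<bar> \<le> 11/40" by (simp add: q_def abs_mult)
  then have q: "-11/40 \<le> q" "q \<le> 11/40" unfolding abs_le_iff by linarith+
  have v12: "1 - 2*r < v1 + v2" "v1 + v2 < 1 + 2*r" using near(2,4) unfolding abs_less_iff by linarith+
  have bisector: "bisector_intercept u1 v1 u2 v2 - bisector_slope u1 v1 u2 v2 * x = (v1 + v2)/2 + q/2"
    unfolding bisector_intercept_def q_def k_def by (simp add: field_simps)
  show "0 \<le> bisector_intercept u1 v1 u2 v2 - bisector_slope u1 v1 u2 v2 * x"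
    unfolding bisector using q v12 r by (simp add: field_simps)
  show "bisector_intercept u1 v1 u2 v2 - bisector_slope u1 v1 u2 v2 * x \<le> 1"
    unfolding bisector using q v12 r by (simp add: field_simps)
qed

lemma Hflat_eq_energy_formula_near_centroidal:
  assumes L: "L \<ge> 1" and w: "w \<in> ball (centroidal_config L) (1/(20*L))"
  shows "w$2 < w$4" and "Hflat L w = energy_formula L (w$1) (w$2) (w$3) (w$4)"
proof -
  have near: "\<bar>w$i - centroidal_config L $ i\<bar> < 1/(20*L)" for i
    using component_le_norm_cart[of "w - centroidal_config L" i] w
    by (simp add: dist_norm norm_minus_commute)
  note near = near[of 1] near[of 2] near[of 3] near[of 4]
  have "1/(20*L) \<le> 1/20" using L by (simp add: field_simps)
  with near show "w$2 < w$4" by simp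
  moreover note bisector_in_strip[OF L near[simplified]]
  ultimately show "Hflat L w = energy_formula L (w$1) (w$2) (w$3) (w$4)"
    unfolding Hflat_def using L by (intro Hcost_eq_energy_formula) auto
qed

definition energy_grad :: "real \<Rightarrow> real^4 \<Rightarrow> real^4" where
  "energy_grad L w = vector [energy_dx1 L (w$1) (w$2) (w$3) (w$4), energy_dy1 L (w$1) (w$2) (w$3) (w$4),
                             energy_dx2 L (w$1) (w$2) (w$3) (w$4), energy_dy2 L (w$1) (w$2) (w$3) (w$4)]"

lemma partial_deriv_Hflat_near_centroidal:
  assumes L: "L \<ge> 1" and w: "w \<in> ball (centroidal_config L) (1/(20*L))"
  shows "partial_deriv j (Hflat L) w = energy_grad L w $ j"
proof (rule partial_deriv_local[OF open_ball w])
  show "\<And>v. v \<in> ball (centroidal_config L) (1/(20*L)) \<Longrightarrow>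
      Hflat L v = energy_formula L (v$1) (v$2) (v$3) (v$4)"
    using Hflat_eq_energy_formula_near_centroidal[OF L] by blast
  have "w$2 \<noteq> w$4" using Hflat_eq_energy_formula_near_centroidal[OF L w] by simp
  then show "((\<lambda>t. energy_formula L ((w + t *\<^sub>R axis j 1)$1) ((w + t *\<^sub>R axis j 1)$2)
      ((w + t *\<^sub>R axis j 1)$3) ((w + t *\<^sub>R axis j 1)$4)) has_real_derivative energy_grad L w $ j) (at 0)"
    using exhaust_4[of j]
    by (auto simp: axis_def energy_grad_def energy_formula_deriv_x1 energy_formula_deriv_y1
        energy_formula_deriv_x2 energy_formula_deriv_y2)
qed

lemma energy_grad_deriv_at_centroidal:
  "((\<lambda>t. energy_grad L (centroidal_config L + t *\<^sub>R axis i 1) $ j) has_real_derivative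
      swap_symmetric_matrix (L - L^3/3) (L^3/3) (3*L/4) (-L/4) $ i $ j) (at 0)"
  using exhaust_4[of i] exhaust_4[of j]
  apply (elim disjE)
  apply (simp_all add: axis_def energy_grad_def swap_symmetric_matrix_def)
  unfolding energy_dx1_def energy_dy1_def energy_dx2_def energy_dy2_def bisector_intercept_def
    bisector_slope_def Let_def
  apply (((rule derivative_eq_intros refl | simp)+,
      (simp add: field_simps power2_eq_square power3_eq_cube)?)[1])+
  done

lemma hessian_Hflat_centroidal:
  assumes "L \<ge> 1"
  shows "hessian (Hflat L) (centroidal_config L) = swap_symmetric_matrix (L - L^3/3) (L^3/3) (3*L/4) (-L/4)"
proof -
  have "centroidal_config L \<in> ball (centroidal_config L) (1/(20*L))" using assms by simp
  then have "partial_deriv i (partial_deriv j (Hflat L)) (centroidal_config L)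
      = swap_symmetric_matrix (L - L^3/3) (L^3/3) (3*L/4) (-L/4) $ i $ j" for i j
    by (rule partial_deriv_local[OF open_ball _ partial_deriv_Hflat_near_centroidal[OF assms]
          energy_grad_deriv_at_centroidal])
  then show ?thesis unfolding hessian_def by (simp add: vec_eq_iff)
qed

theorem mainTheorem9:
  fixes L :: real
  assumes "L \<ge> 1"
  shows "(L > sqrt (3/2) \<longrightarrow>
            num_neg_eigenvalues (hessian (Hflat L) (vector [L/2, 1/4, L/2, 3/4])) = 1)
       \<and> (L = sqrt (3/2) \<longrightarrow>
            is_eigenvalue (hessian (Hflat L) (vector [L/2, 1/4, L/2, 3/4])) 0)"
proof -
  have H: "hessian (Hflat L) (vector [L/2, 1/4, L/2, 3/4])
      = swap_symmetric_matrix (L - L^3/3) (L^3/3) (3*L/4) (-L/4)"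
    using hessian_Hflat_centroidal[OF assms] by (simp add: centroidal_config_def)
  have diff: "(L - L^3/3) - L^3/3 = L * (1 - 2/3 * L^2)"
    by (simp add: algebra_simps power3_eq_cube power2_eq_square)
  show ?thesis
  proof (intro conjI impI)
    assume "L > sqrt (3/2)"
    then have "sqrt (3/2) ^ 2 < L^2" by (intro power_strict_mono) auto
    then have "L^2 > 3/2" by simp
    then have "L * (1 - 2/3 * L^2) < 0" using assms by (intro mult_pos_neg) auto
    then show "num_neg_eigenvalues (hessian (Hflat L) (vector [L/2, 1/4, L/2, 3/4])) = 1"
      unfolding H using assms by (intro num_neg_eigenvalues_swap_symmetric_matrix) (auto simp: diff)
  next
    assume "L = sqrt (3/2)"
    then have "(L - L^3/3) - L^3/3 = 0" unfolding diff by simp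
    then show "is_eigenvalue (hessian (Hflat L) (vector [L/2, 1/4, L/2, 3/4])) 0"
      unfolding H using is_eigenvalue_swap_symmetric_matrix_diff by metis
  qed
qed

end
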